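(* Let $k\ge1$ and let $\mathcal{C}$ be a set of admissible $(k+1)$-words. Let $W_k\langle\mathcal{C}\rangle$ be the smallest $T_k$-invariant subspace of $V_k$ containing $\psi_k(V_1)$ and the vectors $[\eta w]$ for $w\in\mathcal{C}$. Then $T_k\langle\mathcal{C}\rangle$ maps $W_k\langle\mathcal{C}\rangle$ into itself, and the induced map on $V_k/W_k\langle\mathcal{C}\rangle$ is nilpotent.
   Context: Let $\mathcal{A}$ be a finite alphabet of $r$ symbols and $T=(T_{x,y})$ an $r\times r$ matrix with entries in $\{0,1\}$. An admissible $k$-word is a string $a_1\cdots a_k$ of symbols with $T_{a_{i+1},a_i}=1$ for $1\le i\le k-1$. $V_k$ is the complex vector space with basis $\{[w]\}$ indexed by admissible $k$-words. $\psi_k:V_1\to V_k$ is linear with $\psi_k([a])$ the sum of $[w]$ over all admissible $k$-words beginning with $a$. $T_k:V_k\to V_k$ is linear with $T_k([a_1\cdots a_k])=\sum[a_2\cdots a_kx]$, summed over symbols $x$ with $a_2\cdots a_kx$ admissible. For a word $w$, $\beta w$ and $\eta w$ denote the words obtained by deleting the last and the first symbol, respectively. For an admissible $(k+1)$-word $w$, $E_w:V_k\to V_k$ is the linear map with $E_w[\beta w]=[\eta w]$ and $E_w[u]=0$ for every other admissible $k$-word $u$. For a set $\mathcal{C}$ of admissible $(k+1)$-words, $T_k\langle\mathcal{C}\rangle=T_k-\sum_{w\in\mathcal{C}}E_w$. *)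

theory Defs
  imports Complex_Main
begin

text \<open>Transition matrix T: T x y = True iff T_{x,y} = 1.
  Vectors of V_k are coefficient functions 'a list => complex supported on admissible k-words;
  the basis vector [w] is bvec w.\<close>

definition adm :: "('a \<Rightarrow> 'a \<Rightarrow> bool) \<Rightarrow> nat \<Rightarrow> 'a list \<Rightarrow> bool" where
  "adm T k w \<longleftrightarrow> length w = k \<and> (\<forall>i. Suc i < k \<longrightarrow> T (w ! Suc i) (w ! i))"

definition words :: "('a \<Rightarrow> 'a \<Rightarrow> bool) \<Rightarrow> nat \<Rightarrow> 'a list set" where
  "words T k = {w. adm T k w}"

definition Vsp :: "('a \<Rightarrow> 'a \<Rightarrow> bool) \<Rightarrow> nat \<Rightarrow> ('a list \<Rightarrow> complex) set" where
  "Vsp T k = {v. \<forall>u. \<not> adm T k u \<longrightarrow> v u = 0}"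

definition bvec :: "'a list \<Rightarrow> ('a list \<Rightarrow> complex)" where
  "bvec w = (\<lambda>u. if u = w then 1 else 0)"

definition Tk :: "('a::finite \<Rightarrow> 'a \<Rightarrow> bool) \<Rightarrow> nat \<Rightarrow> ('a list \<Rightarrow> complex) \<Rightarrow> ('a list \<Rightarrow> complex)" where
  "Tk T k v = (\<lambda>u. \<Sum>w\<in>words T k. v w * (\<Sum>x\<in>{x. adm T k (tl w @ [x])}. bvec (tl w @ [x]) u))"

definition psi :: "('a::finite \<Rightarrow> 'a \<Rightarrow> bool) \<Rightarrow> nat \<Rightarrow> ('a list \<Rightarrow> complex) \<Rightarrow> ('a list \<Rightarrow> complex)" where
  "psi T k v = (\<lambda>u. \<Sum>a\<in>UNIV. v [a] * (\<Sum>w\<in>{w. adm T k w \<and> hd w = a}. bvec w u))"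

text \<open>E_w for an admissible (k+1)-word w: [beta w] maps to [eta w], other basis vectors to 0.
  beta w = butlast w, eta w = tl w.\<close>
definition Ew :: "'a list \<Rightarrow> ('a list \<Rightarrow> complex) \<Rightarrow> ('a list \<Rightarrow> complex)" where
  "Ew w v = (\<lambda>u. v (butlast w) * bvec (tl w) u)"

definition TC :: "('a::finite \<Rightarrow> 'a \<Rightarrow> bool) \<Rightarrow> nat \<Rightarrow> 'a list set \<Rightarrow> ('a list \<Rightarrow> complex) \<Rightarrow> ('a list \<Rightarrow> complex)" where
  "TC T k C v = (\<lambda>u. Tk T k v u - (\<Sum>w\<in>C. Ew w v u))"

definition csubspace :: "('a list \<Rightarrow> complex) set \<Rightarrow> bool" where
  "csubspace S \<longleftrightarrow> (\<lambda>u. 0) \<in> S \<and> (\<forall>x\<in>S. \<forall>y\<in>S. (\<lambda>u. x u + y u) \<in> S)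
     \<and> (\<forall>c. \<forall>x\<in>S. (\<lambda>u. c * x u) \<in> S)"

definition WC :: "('a::finite \<Rightarrow> 'a \<Rightarrow> bool) \<Rightarrow> nat \<Rightarrow> 'a list set \<Rightarrow> ('a list \<Rightarrow> complex) set" where
  "WC T k C = \<Inter>{S. S \<subseteq> Vsp T k \<and> csubspace S \<and> (\<forall>v\<in>S. Tk T k v \<in> S)
       \<and> (\<forall>v\<in>Vsp T 1. psi T k v \<in> S) \<and> (\<forall>w\<in>C. bvec (tl w) \<in> S)}"

end

theory Submission
  imports Defs
begin

text \<open>The value of \<open>T\<^sub>k f\<close> at an admissible word \<open>u\<close> is a sum of values of \<open>f\<close> at the words
  \<open>a # butlast u\<close>, so it depends only on \<open>butlast u\<close> and, through admissibility, on \<open>hd u\<close>.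
  Hence after \<open>k\<close> applications of \<open>T\<^sub>k\<close> the value at \<open>u\<close> depends only on \<open>hd u\<close>, i.e. the
  image of \<open>T\<^sub>k\<^sup>k\<close> lies in \<open>\<psi>\<^sub>k(V\<^sub>1)\<close>. On the other hand \<open>T\<^sub>k\<langle>C\<rangle>\<close> differs from \<open>T\<^sub>k\<close> by
  a map with values in the span of the \<open>[\<eta> w]\<close>, and \<open>W\<^sub>k\<langle>C\<rangle>\<close> is \<open>T\<^sub>k\<close>-invariant, so
  \<open>T\<^sub>k\<langle>C\<rangle>\<^sup>n v - T\<^sub>k\<^sup>n v \<in> W\<^sub>k\<langle>C\<rangle>\<close> for all \<open>n\<close>. With \<open>n = k\<close> both facts together give
  nilpotency on the quotient.\<close>

lemma adm_Cons: "adm T (Suc n) (a # v) \<longleftrightarrow> adm T n v \<and> (v = [] \<or> T (hd v) a)"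
proof
  assume adm: "adm T (Suc n) (a # v)"
  then have len: "length v = n" by (simp add: adm_def)
  have "T (v ! Suc i) (v ! i)" if "Suc i < n" for i
  proof -
    have "T ((a # v) ! Suc (Suc i)) ((a # v) ! Suc i)"
      using adm that unfolding adm_def by blast
    then show ?thesis by simp
  qed
  moreover have "v = [] \<or> T (hd v) a"
    using adm len by (cases v) (auto simp: adm_def)
  ultimately show "adm T n v \<and> (v = [] \<or> T (hd v) a)"
    using len by (simp add: adm_def)
next
  assume adm: "adm T n v \<and> (v = [] \<or> T (hd v) a)"
  show "adm T (Suc n) (a # v)"
    unfolding adm_def
  proof (intro conjI allI impI)
    fix i assume "Suc i < Suc n"
    then show "T ((a # v) ! Suc i) ((a # v) ! i)"
      using adm by (cases i; cases v) (auto simp: adm_def)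
  qed (use adm in \<open>simp add: adm_def\<close>)
qed

lemma adm_length: "adm T k u \<Longrightarrow> length u = k"
  by (simp add: adm_def)

lemma adm_butlast: "adm T k u \<Longrightarrow> adm T (k - 1) (butlast u)"
  unfolding adm_def by (auto simp: nth_butlast)

lemma adm_Cons_butlast_iff:
  assumes "k \<ge> 1" "adm T k u"
  shows "adm T k (a # butlast u) \<longleftrightarrow> k = 1 \<or> T (hd u) a"
proof -
  obtain n where n: "k = Suc n" using assms(1) by (cases k) auto
  have "adm T k (a # butlast u) \<longleftrightarrow> butlast u = [] \<or> T (hd (butlast u)) a"
    using n adm_Cons[of T n a "butlast u"] adm_butlast[OF assms(2)] by simp
  also have "\<dots> \<longleftrightarrow> k = 1 \<or> T (hd u) a"
    using adm_length[OF assms(2)] n by (cases u) auto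
  finally show ?thesis .
qed

lemma finite_words: "finite (words T n :: 'a::finite list set)"
proof -
  have "words T n \<subseteq> {xs. set xs \<subseteq> UNIV \<and> length xs = n}"
    by (auto simp: words_def adm_def)
  then show ?thesis
    using finite_lists_length_eq[of "UNIV :: 'a set" n] finite_subset by auto
qed

lemma Tk_apply_eq_sum_tl:
  assumes "k \<ge> 1"
  shows "Tk T k f u = (if adm T k u then (\<Sum>w\<in>{w\<in>words T k. tl w = butlast u}. f w) else 0)"
proof -
  have successors: "(\<Sum>x\<in>{x. adm T k (tl w @ [x])}. bvec (tl w @ [x]) u) =
      (if adm T k u \<and> tl w = butlast u then 1 else 0)" for w
  proof (cases "u = []")
    case True
    then show ?thesis using assms by (auto simp: bvec_def adm_def)
  next
    case False
    then have snoc_eq: "u = tl w @ [x] \<longleftrightarrow> tl w = butlast u \<and> x = last u" for x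
      by (metis append_butlast_last_id butlast_snoc last_snoc)
    have "(\<Sum>x\<in>{x. adm T k (tl w @ [x])}. bvec (tl w @ [x]) u)
        = (\<Sum>x\<in>{x. adm T k (tl w @ [x])}. if x = last u then (if tl w = butlast u then 1 else 0) else 0)"
      by (rule sum.cong) (auto simp: bvec_def snoc_eq)
    also have "\<dots> = (if adm T k u \<and> tl w = butlast u then 1 else 0)"
      using False by (simp add: append_butlast_last_id)
    finally show ?thesis .
  qed
  have "Tk T k f u = (\<Sum>w\<in>words T k. if adm T k u \<and> tl w = butlast u then f w else 0)"
    unfolding Tk_def by (rule sum.cong) (auto simp: successors)
  then show ?thesis
    by (auto simp: sum.inter_filter[symmetric] finite_words)
qed

lemma Tk_apply_eq_sum_Cons_butlast:
  assumes "k \<ge> 1" "adm T k u"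
  shows "Tk T k f u = (\<Sum>a\<in>{a. adm T k (a # butlast u)}. f (a # butlast u))"
proof -
  have "{w\<in>words T k. tl w = butlast u} = (\<lambda>a. a # butlast u) ` {a. adm T k (a # butlast u)}"
  proof (intro set_eqI iffI)
    fix w assume "w \<in> {w\<in>words T k. tl w = butlast u}"
    then have w: "adm T k w" "tl w = butlast u" by (auto simp: words_def)
    moreover have "w \<noteq> []"
      using w(1) assms(1) adm_length by fastforce
    ultimately have "w = hd w # butlast u"
      by (metis list.collapse)
    then show "w \<in> (\<lambda>a. a # butlast u) ` {a. adm T k (a # butlast u)}"
      using w by force
  qed (auto simp: words_def)
  moreover have "inj_on (\<lambda>a. a # butlast u) A" for A
    by (auto simp: inj_on_def)
  ultimately show ?thesis
    using assms by (simp add: Tk_apply_eq_sum_tl sum.reindex)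
qed

lemma Tk_in_Vsp: "k \<ge> 1 \<Longrightarrow> Tk T k f \<in> Vsp T k"
  by (auto simp: Vsp_def Tk_apply_eq_sum_tl)

lemma Tk_diff: "Tk T k (\<lambda>u. x u - y u) = (\<lambda>u. Tk T k x u - Tk T k y u)"
  unfolding Tk_def
  by (auto simp: sum_subtractf[symmetric] left_diff_distrib intro!: sum.cong)

definition determined_by_hd_take ::
    "('a \<Rightarrow> 'a \<Rightarrow> bool) \<Rightarrow> nat \<Rightarrow> nat \<Rightarrow> ('a list \<Rightarrow> complex) \<Rightarrow> bool" where
  "determined_by_hd_take T k m f \<longleftrightarrow>
     (\<forall>u u'. adm T k u \<longrightarrow> adm T k u' \<longrightarrow> take m u = take m u' \<longrightarrow> hd u = hd u' \<longrightarrow> f u = f u')"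

lemma determined_by_hd_takeD:
  "determined_by_hd_take T k m f \<Longrightarrow> adm T k u \<Longrightarrow> adm T k u' \<Longrightarrow>
    take m u = take m u' \<Longrightarrow> hd u = hd u' \<Longrightarrow> f u = f u'"
  unfolding determined_by_hd_take_def by blast

lemma determined_by_hd_take_length: "determined_by_hd_take T k k f"
  by (auto simp: determined_by_hd_take_def adm_def)

lemma determined_by_hd_take_Tk:
  assumes "k \<ge> 1" "determined_by_hd_take T k (Suc m) f"
  shows "determined_by_hd_take T k m (Tk T k f)"
  unfolding determined_by_hd_take_def
proof (intro allI impI)
  fix u u' assume u: "adm T k u" and u': "adm T k u'"
    and prefix: "take m u = take m u'" and hd: "hd u = hd u'"
  have len: "length u = k" "length u' = k" using u u' adm_length by auto
  show "Tk T k f u = Tk T k f u'"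
  proof (cases "m \<ge> k")
    case True
    then show ?thesis using prefix len by simp
  next
    case False
    have letters: "{a. adm T k (a # butlast u)} = {a. adm T k (a # butlast u')}"
      using adm_Cons_butlast_iff[OF assms(1) u] adm_Cons_butlast_iff[OF assms(1) u'] hd by simp
    have "take (Suc m) (a # butlast u) = take (Suc m) (a # butlast u')" for a
      using False prefix len by (simp add: take_butlast)
    then have "f (a # butlast u) = f (a # butlast u')"
      if "adm T k (a # butlast u)" "adm T k (a # butlast u')" for a
      using determined_by_hd_takeD[OF assms(2) that] by simp
    then have "(\<Sum>a\<in>{a. adm T k (a # butlast u)}. f (a # butlast u))
        = (\<Sum>a\<in>{a. adm T k (a # butlast u')}. f (a # butlast u'))"
      unfolding letters[symmetric] by (intro sum.cong refl) (use letters in auto)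
    then show ?thesis
      by (simp only: Tk_apply_eq_sum_Cons_butlast[OF assms(1) u] Tk_apply_eq_sum_Cons_butlast[OF assms(1) u'])
  qed
qed

lemma determined_by_hd_take_Tk_pow:
  assumes "k \<ge> 1" "j \<le> k"
  shows "determined_by_hd_take T k (k - j) ((Tk T k ^^ j) f)"
  using assms(2)
proof (induction j)
  case 0
  then show ?case by (simp add: determined_by_hd_take_length)
next
  case (Suc j)
  then have "determined_by_hd_take T k (Suc (k - Suc j)) ((Tk T k ^^ j) f)"
    by (simp add: Suc_diff_Suc)
  then show ?case
    using determined_by_hd_take_Tk[OF assms(1)] by simp
qed

lemma ex_psi_eq_if_determined_by_hd:
  assumes "k \<ge> 1" "f \<in> Vsp T k" "determined_by_hd_take T k 0 f"
  shows "\<exists>g\<in>Vsp T 1. f = psi T k g"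
proof -
  define g where
    "g = (\<lambda>l. if length l = 1 then f (SOME u. adm T k u \<and> hd u = hd l) else 0)"
  have g_in: "g \<in> Vsp T 1" by (auto simp: g_def Vsp_def adm_def)
  have basis_sum: "(\<Sum>w\<in>{w. adm T k w \<and> hd w = a}. bvec w u) =
      (if adm T k u \<and> hd u = a then 1 else 0)" for a u
  proof -
    have "finite {w. adm T k w \<and> hd w = a}"
      using finite_words[of T k] by (rule finite_subset[rotated]) (auto simp: words_def)
    then have "(\<Sum>w\<in>{w. adm T k w \<and> hd w = a}. if u = w then 1 else 0) =
        (if u \<in> {w. adm T k w \<and> hd w = a} then 1 else 0)"
      by (rule sum.delta')
    then show ?thesis by (simp add: bvec_def)
  qed
  have "psi T k g u = f u" for u
  proof -
    have "psi T k g u = (\<Sum>a\<in>UNIV. if a = hd u then (if adm T k u then g [a] else 0) else 0)"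
      unfolding psi_def basis_sum by (intro sum.cong refl) simp
    also have "\<dots> = (if adm T k u then g [hd u] else 0)"
      by (subst sum.delta) simp_all
    also have "\<dots> = f u"
    proof (cases "adm T k u")
      case True
      define s where "s = (SOME u'. adm T k u' \<and> hd u' = hd u)"
      have "\<exists>u'. adm T k u' \<and> hd u' = hd u" using True by blast
      then have s: "adm T k s \<and> hd s = hd u"
        unfolding s_def by (rule someI_ex)
      have "g [hd u] = f s" by (simp add: g_def s_def)
      also have "\<dots> = f u"
        by (rule determined_by_hd_takeD[OF assms(3)]) (use s True in simp_all)
      finally show ?thesis using True by simp
    next
      case False
      then show ?thesis using assms(2) by (simp add: Vsp_def)
    qed
    finally show ?thesis .
  qed
  then have "f = psi T k g" by (simp add: fun_eq_iff)
  then show ?thesis using g_in by blast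
qed

lemma Tk_pow_in_psi_range:
  assumes "k \<ge> 1"
  shows "\<exists>g\<in>Vsp T 1. (Tk T k ^^ k) v = psi T k g"
proof (rule ex_psi_eq_if_determined_by_hd[OF assms])
  obtain n where "k = Suc n" using assms by (cases k) auto
  then show "(Tk T k ^^ k) v \<in> Vsp T k"
    using Tk_in_Vsp[OF assms] by simp
  show "determined_by_hd_take T k 0 ((Tk T k ^^ k) v)"
    using determined_by_hd_take_Tk_pow[OF assms, of k] by simp
qed

lemma WC_Tk: "v \<in> WC T k C \<Longrightarrow> Tk T k v \<in> WC T k C"
  unfolding WC_def by blast

lemma WC_psi: "v \<in> Vsp T 1 \<Longrightarrow> psi T k v \<in> WC T k C"
  unfolding WC_def by blast

lemma WC_bvec_tl: "w \<in> C \<Longrightarrow> bvec (tl w) \<in> WC T k C"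
  unfolding WC_def by blast

lemma WC_zero: "(\<lambda>u. 0) \<in> WC T k C"
  unfolding WC_def csubspace_def by blast

lemma WC_add: "x \<in> WC T k C \<Longrightarrow> y \<in> WC T k C \<Longrightarrow> (\<lambda>u. x u + y u) \<in> WC T k C"
  unfolding WC_def csubspace_def by blast

lemma WC_scale: "x \<in> WC T k C \<Longrightarrow> (\<lambda>u. c * x u) \<in> WC T k C"
  unfolding WC_def csubspace_def by blast

lemma WC_diff:
  assumes "x \<in> WC T k C" "y \<in> WC T k C"
  shows "(\<lambda>u. x u - y u) \<in> WC T k C"
  using WC_add[OF assms(1) WC_scale[OF assms(2), of "-1"]] by simp

lemma WC_sum:
  "finite F \<Longrightarrow> (\<And>w. w \<in> F \<Longrightarrow> g w \<in> WC T k C) \<Longrightarrow> (\<lambda>u. \<Sum>w\<in>F. g w u) \<in> WC T k C"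
proof (induction F rule: finite_induct)
  case empty
  then show ?case using WC_zero by simp
next
  case (insert x F)
  then show ?case using WC_add[of "g x" T k C "\<lambda>u. \<Sum>w\<in>F. g w u"] by simp
qed

lemma sum_Ew_in_WC: "finite C \<Longrightarrow> (\<lambda>u. \<Sum>w\<in>C. Ew w x u) \<in> WC T k C"
  by (rule WC_sum) (auto simp: Ew_def intro: WC_scale[OF WC_bvec_tl])

lemma TC_pow_diff_Tk_pow_in_WC:
  assumes "finite C"
  shows "(\<lambda>u. (TC T k C ^^ n) v u - (Tk T k ^^ n) v u) \<in> WC T k C"
proof (induction n)
  case 0
  then show ?case using WC_zero by simp
next
  case (Suc n)
  define x where "x = (TC T k C ^^ n) v"
  define y where "y = (Tk T k ^^ n) v"
  have "(\<lambda>u. (TC T k C ^^ Suc n) v u - (Tk T k ^^ Suc n) v u)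
      = (\<lambda>u. Tk T k (\<lambda>u. x u - y u) u - (\<Sum>w\<in>C. Ew w x u))"
    by (simp add: x_def y_def TC_def Tk_diff algebra_simps)
  also have "\<dots> \<in> WC T k C"
    using WC_diff[OF WC_Tk[OF Suc[folded x_def y_def]] sum_Ew_in_WC[OF assms]] .
  finally show ?case .
qed

theorem lemma1p4:
  fixes T :: "'a::finite \<Rightarrow> 'a \<Rightarrow> bool" and k :: nat and C :: "'a list set"
  assumes "k \<ge> 1"
    and "C \<subseteq> words T (Suc k)"
  shows "(\<forall>v\<in>WC T k C. TC T k C v \<in> WC T k C)
    \<and> (\<exists>N. \<forall>v\<in>Vsp T k. (TC T k C ^^ N) v \<in> WC T k C)"
proof -
  have finite_C: "finite C"
    using assms(2) finite_words finite_subset by blast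
  have "TC T k C v \<in> WC T k C" if "v \<in> WC T k C" for v
    unfolding TC_def using WC_diff[OF WC_Tk[OF that] sum_Ew_in_WC[OF finite_C]] .
  moreover have "(TC T k C ^^ k) v \<in> WC T k C" for v
  proof -
    have Tk_pow: "(Tk T k ^^ k) v \<in> WC T k C"
      using Tk_pow_in_psi_range[OF assms(1)] WC_psi by metis
    show ?thesis
      using WC_add[OF TC_pow_diff_Tk_pow_in_WC[OF finite_C, where n = k and v = v] Tk_pow] by simp
  qed
  ultimately show ?thesis by blast
qed

end
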